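(* For every family $(\alpha_k)$ as below, $\mathrm{3SAT}^{\mathrm C}$ is $\mathrm{P}^*_{\mathrm{lsis}}$-complete.
   Context: $\mathbb B=\{T,F\}$. Let $v_1,v_2,\dots$ be propositional variables. For $k\in\mathbb N$ let $d(k)=\binom{2k}{1}+\binom{2k}{2}+\binom{2k}{3}$, and let $L_k$ be the set of sets $L$ of literals from $\{v_1,\neg v_1,\dots,v_k,\neg v_k\}$ with $1\le |L|\le 3$. Let $(\alpha_k)_{k\in\mathbb N}$ be bijections $\alpha_k:[1,d(k)]\to L_k$ with (i) $\alpha_{i+1}(j)=\alpha_i(j)$ for all $i$ and $j\in[1,d(i)]$, and (ii) the map $\alpha(i)=\alpha_k(i)$ (least $k$ with $i\le d(k)$) polynomial-time computable. For $n\in\mathbb N$ let $k$ be such that $d(k)\le n<d(k+1)$ and let $\mathrm{3SAT}^{\mathrm C}_n(b_1,\dots,b_n)=T$ iff $\bigwedge_{i\in[1,d(k)],\,b_i=T}\bigvee\alpha_k(i)$ is satisfiable; $\mathrm{3SAT}^{\mathrm C}=(\mathrm{3SAT}^{\mathrm C}_n)_n$. A primitive instruction is one of: a plain basic instruction $a$, a positive test instruction $+a$, a negative test instruction $-a$, a forward jump instruction $\#l$ ($l\in\mathbb N$), or the termination instruction $!$. An instruction sequence is a finite nonempty sequence $X=u_1;\dots;u_k$ of primitive instructions; $|X|=k$. Basic instructions are either $f.m$ with focus $f\in\{\mathrm{in}{:}i,\mathrm{aux}{:}i: i\ge1\}\cup\{\mathrm{out}\}$ (Boolean registers) and method $m\in\{\mathrm{set}{:}T,\mathrm{set}{:}F,\mathrm{get}\}$,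 or $\mathrm{split}(\mathrm{par}{:}i)$, $\mathrm{reply}(\mathrm{par}{:}i)$ for Boolean parameters $\mathrm{par}{:}i$. $f.\mathrm{set}{:}b$ sets register $f$ to $b$ and yields $b$; $f.\mathrm{get}$ yields the register's content. Non-splitting execution: a counter starts at 1; if it exceeds $k$, execution deadlocks. At position $i$: $!$ terminates; $\#l$ deadlocks if $l=0$, else the counter becomes $i+l$; for $a,+a,-a$ the instruction $a$ yields reply $r$ and the counter becomes $i+1$ for $a$; for $+a$: $i+1$ if $r=T$, $i+2$ if $r=F$; for $-a$: $i+1$ if $r=F$, $i+2$ if $r=T$. $\mathrm{IS}_{br}$: sequences all of whose basic instructions lie in $\{f.\mathrm{get}: f=\mathrm{in}{:}i\text{ or }\mathrm{aux}{:}i\}\cup\{f.\mathrm{set}{:}b: f=\mathrm{aux}{:}i\text{ or }\mathrm{out}\}$. $X\in\mathrm{IS}_{br}$ computes $f:\mathbb B^n\to\mathbb B$ if for every $b\in\mathbb B^n$, executing $X$ with $\mathrm{in}{:}j$ initialised to $b_j$, all $\mathrm{aux}{:}i$ and $\mathrm{out}$ initialised to $F$, terminates without deadlock, never executes a basic instruction with focus $\mathrm{in}{:}j$, $j>n$, and ends with $\mathrm{out}$ containing $f(b)$. $\mathrm{SIS}_{br}$: sequences all of whose basic instructions lie in $\{\mathrm{in}{:}i.\mathrm{get}\}\cup\{\mathrm{out}.\mathrm{set}{:}T\}\cup\{\mathrm{split}(\mathrm{par}{:}i),\mathrm{reply}(\mathrm{par}{:}i)\}$. Splitting execution of $X\in\mathrm{SIS}_{br}$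 on $b\in\mathbb B^n$ is a finite tree of branches, each with a counter (initially 1) and a partial parameter assignment $\sigma$ (initially empty); a branch deadlocks under the non-splitting deadlock conditions, or if it executes $\mathrm{in}{:}j.\mathrm{get}$ with $j>n$, $\mathrm{reply}(p)$ with $\sigma(p)$ undefined, or $\mathrm{split}(p)$ with $\sigma(p)$ defined; otherwise instructions act as in non-splitting execution with replies $\mathrm{in}{:}j.\mathrm{get}\mapsto b_j$, $\mathrm{out}.\mathrm{set}{:}T\mapsto T$, $\mathrm{reply}(p)\mapsto\sigma(p)$, and $\mathrm{split}(p)$ replacing the branch by two branches, one with reply $T$ and $\sigma\cup\{p\mapsto T\}$, one with reply $F$ and $\sigma\cup\{p\mapsto F\}$. A branch reaching $!$ terminates successfully. $X$ splitting computes $f$ if for every $b$ every branch terminates successfully and $f(b)=T$ iff some branch executes $\mathrm{out}.\mathrm{set}{:}T$. $\mathrm{P}^*_{\mathrm{lsis}}$: Boolean function families $(f_n)$, $f_n:\mathbb B^n\to\mathbb B$, for which there is a polynomial $h$ such that for every $n$ some $X\in\mathrm{SIS}_{br}$ splitting computes $f_n$ with $|X|\le h(n)$. For $f:\mathbb B^n\to\mathbb B$, $g:\mathbb B^m\to\mathbb B$, $f\le_l g$ iff there are $h_1,\dots,h_m:\mathbb B^n\to\mathbb B$ computed by some $X_1,\dots,X_m\in\mathrm{IS}_{br}$ with $|X_i|\le l$ such that $f(b)=g(h_1(b),\dots,h_m(b))$ for all $b$. $(f_n)\le_{\mathrm{pl}}(g_n)$ iff there is a polynomial $q$ such that for every $n$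 there are $l,m\le q(n)$ with $f_n\le_l g_m$. $(f_n)$ is $\mathrm{P}^*_{\mathrm{lsis}}$-complete iff $(f_n)\in\mathrm{P}^*_{\mathrm{lsis}}$ and $(g_n)\le_{\mathrm{pl}}(f_n)$ for every $(g_n)\in\mathrm{P}^*_{\mathrm{lsis}}$. *)

theory Defs
  imports Main "HOL-Computational_Algebra.Polynomial"
begin

datatype lit = Pos nat | Neg nat   (* Pos i = v_i,  Neg i = not v_i  (i \<ge> 1) *)

definition lits :: "nat \<Rightarrow> lit set" where
  "lits k = Pos ` {1..k} \<union> Neg ` {1..k}"

definition Lk :: "nat \<Rightarrow> lit set set" where
  "Lk k = {L. L \<subseteq> lits k \<and> 1 \<le> card L \<and> card L \<le> 3}"

definition d :: "nat \<Rightarrow> nat" where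
  "d k = (2*k choose 1) + (2*k choose 2) + (2*k choose 3)"

fun lit_val :: "(nat \<Rightarrow> bool) \<Rightarrow> lit \<Rightarrow> bool" where
  "lit_val \<sigma> (Pos i) = \<sigma> i"
| "lit_val \<sigma> (Neg i) = (\<not> \<sigma> i)"

definition admissible_alpha :: "(nat \<Rightarrow> nat \<Rightarrow> lit set) \<Rightarrow> bool" where
  "admissible_alpha alpha \<longleftrightarrow>
     (\<forall>k. bij_betw (alpha k) {1..d k} (Lk k)) \<and>
     (\<forall>i j. j \<in> {1..d i} \<longrightarrow> alpha (Suc i) j = alpha i j)"

definition kof :: "nat \<Rightarrow> nat" where
  "kof n = (THE k. d k \<le> n \<and> n < d (Suc k))"

text \<open>Boolean function families: f n is f_n, applied to inputs b = [b_1,...,b_n]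
  (lists of length n; values on other lengths are irrelevant).\<close>
type_synonym bfam = "nat \<Rightarrow> bool list \<Rightarrow> bool"

definition sat3C :: "(nat \<Rightarrow> nat \<Rightarrow> lit set) \<Rightarrow> bfam" where
  "sat3C alpha n b =
     (let k = kof n in
      \<exists>\<sigma> :: nat \<Rightarrow> bool. \<forall>i \<in> {1..d k}. b ! (i - 1) \<longrightarrow> (\<exists>l \<in> alpha k i. lit_val \<sigma> l))"

datatype focus = In nat | Aux nat | Out
datatype meth = Set bool | Get
datatype basic = Reg focus meth | Split nat | Reply nat
datatype prim = Plain basic | PosT basic | NegT basic | Jump nat | Term

type_synonym iseq = "prim list"

fun basic_of :: "prim \<Rightarrow> basic option" where
  "basic_of (Plain a) = Some a"
| "basic_of (PosT a) = Some a"
| "basic_of (NegT a) = Some a"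
| "basic_of _ = None"

fun nxt :: "prim \<Rightarrow> bool \<Rightarrow> nat \<Rightarrow> nat" where
  "nxt (PosT a) r i = (if r then i + 1 else i + 2)"
| "nxt (NegT a) r i = (if r then i + 2 else i + 1)"
| "nxt _ r i = i + 1"

definition basics :: "iseq \<Rightarrow> basic set" where
  "basics X = {a. \<exists>u \<in> set X. basic_of u = Some a}"

definition IS_br :: "iseq set" where
  "IS_br = {X. X \<noteq> [] \<and> basics X \<subseteq>
      {Reg (In i) Get | i. i \<ge> 1} \<union> {Reg (Aux i) Get | i. i \<ge> 1}
      \<union> {Reg (Aux i) (Set b) | i b. i \<ge> 1} \<union> {Reg Out (Set b) | b. True}}"

definition SIS_br :: "iseq set" where
  "SIS_br = {X. X \<noteq> [] \<and> basics X \<subseteq>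
      {Reg (In i) Get | i. i \<ge> 1} \<union> {Reg Out (Set True)}
      \<union> {Split i | i. i \<ge> 1} \<union> {Reply i | i. i \<ge> 1}}"

text \<open>Effect of a register instruction on the register state (n = input length).
  None = deadlock (in particular accessing in:j with j > n).\<close>
fun reg_eff :: "nat \<Rightarrow> basic \<Rightarrow> (focus \<Rightarrow> bool) \<Rightarrow> (bool \<times> (focus \<Rightarrow> bool)) option" where
  "reg_eff n (Reg f Get) s =
     (case f of In j \<Rightarrow> if 1 \<le> j \<and> j \<le> n then Some (s f, s) else None
              | _ \<Rightarrow> Some (s f, s))"
| "reg_eff n (Reg f (Set b)) s =
     (case f of In j \<Rightarrow> if 1 \<le> j \<and> j \<le> n then Some (b, s(f := b)) else None
              | _ \<Rightarrow> Some (b, s(f := b)))"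
| "reg_eff n _ s = None"

text \<open>nexec X n i s s': execution of X from counter i with registers s terminates
  successfully (reaches !) with final registers s'.  Absence of a derivation =
  deadlock.\<close>
inductive nexec :: "iseq \<Rightarrow> nat \<Rightarrow> nat \<Rightarrow> (focus \<Rightarrow> bool) \<Rightarrow> (focus \<Rightarrow> bool) \<Rightarrow> bool"
  for X n where
  nterm: "\<lbrakk>1 \<le> i; i \<le> length X; X ! (i - 1) = Term\<rbrakk> \<Longrightarrow> nexec X n i s s"
| njump: "\<lbrakk>1 \<le> i; i \<le> length X; X ! (i - 1) = Jump l; l \<noteq> 0;
          nexec X n (i + l) s s'\<rbrakk> \<Longrightarrow> nexec X n i s s'"
| nbasic: "\<lbrakk>1 \<le> i; i \<le> length X; basic_of (X ! (i - 1)) = Some a;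
           reg_eff n a s = Some (r, s1); nexec X n (nxt (X ! (i - 1)) r i) s1 s'\<rbrakk>
           \<Longrightarrow> nexec X n i s s'"

definition init_regs :: "bool list \<Rightarrow> focus \<Rightarrow> bool" where
  "init_regs b f = (case f of In j \<Rightarrow> (if 1 \<le> j \<and> j \<le> length b then b ! (j - 1) else False)
                              | _ \<Rightarrow> False)"

definition computes :: "iseq \<Rightarrow> nat \<Rightarrow> (bool list \<Rightarrow> bool) \<Rightarrow> bool" where
  "computes X n f \<longleftrightarrow> X \<in> IS_br \<and>
     (\<forall>b. length b = n \<longrightarrow> (\<exists>s'. nexec X n 1 (init_regs b) s' \<and> s' Out = f b))"

text \<open>Reply of a non-split basic instruction in a branch with parameter assignment
  sigma, together with a flag telling whether it is out.set:T.  None = deadlock.\<close>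
fun sreply :: "bool list \<Rightarrow> (nat \<Rightarrow> bool option) \<Rightarrow> basic \<Rightarrow> (bool \<times> bool) option" where
  "sreply b \<sigma> (Reg (In j) Get) =
     (if 1 \<le> j \<and> j \<le> length b then Some (b ! (j - 1), False) else None)"
| "sreply b \<sigma> (Reg Out (Set True)) = Some (True, True)"
| "sreply b \<sigma> (Reply p) = map_option (\<lambda>r. (r, False)) (\<sigma> p)"
| "sreply b \<sigma> _ = None"

text \<open>sexec X b i sigma t: every branch of the splitting execution of X on input b
  starting from a branch with counter i and parameter assignment sigma terminates
  successfully, and t holds iff some branch executes out.set:T.\<close>
inductive sexec :: "iseq \<Rightarrow> bool list \<Rightarrow> nat \<Rightarrow> (nat \<Rightarrow> bool option) \<Rightarrow> bool \<Rightarrow> bool"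
  for X b where
  sterm: "\<lbrakk>1 \<le> i; i \<le> length X; X ! (i - 1) = Term\<rbrakk> \<Longrightarrow> sexec X b i \<sigma> False"
| sjump: "\<lbrakk>1 \<le> i; i \<le> length X; X ! (i - 1) = Jump l; l \<noteq> 0;
          sexec X b (i + l) \<sigma> t\<rbrakk> \<Longrightarrow> sexec X b i \<sigma> t"
| sbasic: "\<lbrakk>1 \<le> i; i \<le> length X; basic_of (X ! (i - 1)) = Some a;
           sreply b \<sigma> a = Some (r, w); sexec X b (nxt (X ! (i - 1)) r i) \<sigma> t\<rbrakk>
           \<Longrightarrow> sexec X b i \<sigma> (w \<or> t)"
| ssplit: "\<lbrakk>1 \<le> i; i \<le> length X; basic_of (X ! (i - 1)) = Some (Split p); \<sigma> p = None;
           sexec X b (nxt (X ! (i - 1)) True i) (\<sigma>(p \<mapsto> True)) t1;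
           sexec X b (nxt (X ! (i - 1)) False i) (\<sigma>(p \<mapsto> False)) t2\<rbrakk>
           \<Longrightarrow> sexec X b i \<sigma> (t1 \<or> t2)"

definition split_computes :: "iseq \<Rightarrow> nat \<Rightarrow> (bool list \<Rightarrow> bool) \<Rightarrow> bool" where
  "split_computes X n f \<longleftrightarrow> X \<in> SIS_br \<and>
     (\<forall>b. length b = n \<longrightarrow> (\<exists>t. sexec X b 1 Map.empty t \<and> (f b \<longleftrightarrow> t)))"

definition P_lsis :: "bfam set" where
  "P_lsis = {F. \<exists>h :: nat poly. \<forall>n. \<exists>X. split_computes X n (F n) \<and> length X \<le> poly h n}"

text \<open>red_l l n f m g:  f <=_l g  for f : B^n -> B, g : B^m -> B
  (h i is h_(i+1)).\<close>
definition red_l :: "nat \<Rightarrow> nat \<Rightarrow> (bool list \<Rightarrow> bool) \<Rightarrow> nat \<Rightarrow> (bool list \<Rightarrow> bool) \<Rightarrow> bool" where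
  "red_l l n f m g \<longleftrightarrow>
     (\<exists>h :: nat \<Rightarrow> bool list \<Rightarrow> bool.
        (\<forall>i < m. \<exists>X. computes X n (h i) \<and> length X \<le> l) \<and>
        (\<forall>b. length b = n \<longrightarrow> f b = g (map (\<lambda>i. h i b) [0..<m])))"

definition red_pl :: "bfam \<Rightarrow> bfam \<Rightarrow> bool" where
  "red_pl F G \<longleftrightarrow> (\<exists>q :: nat poly. \<forall>n. \<exists>l m. l \<le> poly q n \<and> m \<le> poly q n \<and> red_l l n (F n) m (G m))"

definition P_lsis_complete :: "bfam \<Rightarrow> bool" where
  "P_lsis_complete F \<longleftrightarrow> F \<in> P_lsis \<and> (\<forall>G \<in> P_lsis. red_pl G F)"

end

theory Submission
  imports Defs
begin

text \<open>
  Membership.  For inputs of length n let k = kof n.  The splitting instruction sequence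
  first splits on the parameters par:1, ..., par:k, so that every branch carries a total
  truth assignment to v_1, ..., v_k; then, for every clause index c \<le> d k, it reads in:c
  and, if the clause alpha_k(c) is selected, tests its (at most three) literals by reply
  instructions, terminating without output when none of them holds.  A branch that
  survives all clauses executes out.set:T.  Hence some branch sets the output iff the
  selected clauses are satisfiable, and the sequence has length O(n).

  Hardness.  Let X splitting-compute f on inputs of length n, |X| = L.  We write down
  clauses over 2L variables: variable i \<le> L says "instruction i lies on the chosen
  branch", and each parameter p of X gets its own variable above L.  Each instruction
  contributes at most two clauses of size \<le> 3, some of them guarded by one input bit.
  An accepting branch yields a model of the active clauses (by induction over the
  splitting execution), and conversely a model steers the execution to a branch
  executing out.set:T.  Whether a fixed clause of L_(2L) is active is a disjunction of
  input literals, computable by an instruction sequence of length O(L); these bits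
  form the input of 3SAT^C_(d (2L)), which by bijectivity of alpha_(2L) decides exactly
  the satisfiability of the active clauses.
\<close>

lemma binomial_le_power: "(n::nat) choose r \<le> n ^ r"
  by (cases "r \<le> n") (auto intro: binomial_le_pow simp: binomial_eq_0)

text \<open>d grows only cubically; this keeps the reduction polynomial.\<close>
lemma d_upper_bound: "d k \<le> (2 * k + 1) ^ 3"
proof -
  have "d k \<le> (2 * k) ^ 1 + (2 * k) ^ 2 + (2 * k) ^ 3"
    unfolding d_def using binomial_le_power[of "2 * k"] by (metis add_mono)
  also have "\<dots> \<le> (2 * k + 1) ^ 3"
    by (simp add: power3_eq_cube power2_eq_square algebra_simps)
  finally show ?thesis .
qed

lemma d_lower_bound: "k \<le> d k"
  unfolding d_def by simp

lemma d_strict_mono: "strict_mono d"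
unfolding strict_mono_Suc_iff
proof
  fix k
  have "2 * k choose 2 \<le> 2 * Suc k choose 2" "2 * k choose 3 \<le> 2 * Suc k choose 3"
    by (auto intro!: binomial_right_mono)
  then show "d k < d (Suc k)" unfolding d_def by simp
qed

lemma d_interval_exists: "\<exists>k. d k \<le> n \<and> n < d (Suc k)"
proof (induction n)
  case 0
  show ?case by (rule exI[of _ 0]) (simp add: d_def)
next
  case (Suc n)
  then obtain k where k: "d k \<le> n" "n < d (Suc k)" by blast
  show ?case
  proof (cases "Suc n < d (Suc k)")
    case True
    then show ?thesis using k by (intro exI[of _ k]) simp
  next
    case False
    then have "d (Suc k) = Suc n" using k by simp
    then show ?thesis
      using strict_monoD[OF d_strict_mono, of "Suc k" "Suc (Suc k)"] by (intro exI[of _ "Suc k"]) simp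
  qed
qed

lemma d_interval_unique:
  assumes "d a \<le> n" "n < d (Suc a)" "d b \<le> n" "n < d (Suc b)"
  shows "a = b"
proof -
  have "a < Suc b" "b < Suc a"
    using assms strict_mono_less[OF d_strict_mono] by (metis le_less_trans)+
  then show ?thesis by simp
qed

lemma kof_bounds: "d (kof n) \<le> n \<and> n < d (Suc (kof n))"
  unfolding kof_def using d_interval_exists[of n] d_interval_unique[of _ n]
  by (metis (mono_tags, lifting) theI)

lemma kof_d [simp]: "kof (d k) = k"
  using kof_bounds[of "d k"] d_interval_unique[of k "d k" "kof (d k)"]
    strict_monoD[OF d_strict_mono, of k "Suc k"] by simp

lemma basics_append: "basics (A @ B) = basics A \<union> basics B"
  by (auto simp: basics_def)

lemma basics_Cons:
  "basics (u # A) = (case basic_of u of Some a \<Rightarrow> {a} | None \<Rightarrow> {}) \<union> basics A"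
  by (auto simp: basics_def split: option.splits)

lemma sexec_counter_valid: "sexec X b i \<sigma> t \<Longrightarrow> 1 \<le> i \<and> i \<le> length X"
  by (induction rule: sexec.induct) auto

lemma sreply_cases:
  "sreply b \<sigma> a = Some (r, w) \<Longrightarrow>
   (\<exists>j. a = Reg (In j) Get \<and> 1 \<le> j \<and> j \<le> length b \<and> r = b ! (j - 1) \<and> \<not> w)
   \<or> (a = Reg Out (Set True) \<and> w)
   \<or> (\<exists>p. a = Reply p \<and> \<sigma> p = Some r \<and> \<not> w)"
  by (induction b \<sigma> a rule: sreply.induct) (auto split: if_splits)

fun var :: "lit \<Rightarrow> nat" where
  "var (Pos v) = v" | "var (Neg v) = v"

lemma var_lits: "l \<in> lits k \<Longrightarrow> var l \<in> {1..k}"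
  by (auto simp: lits_def)

lemma Neg_lits: "1 \<le> i \<Longrightarrow> i \<le> k \<Longrightarrow> Neg i \<in> lits k"
  and Pos_lits: "1 \<le> i \<Longrightarrow> i \<le> k \<Longrightarrow> Pos i \<in> lits k"
  by (auto simp: lits_def)

lemma Lk_finite: "C \<in> Lk k \<Longrightarrow> finite C"
  unfolding Lk_def using card.infinite by fastforce

lemma Lk_intro:
  assumes "A \<subseteq> lits k" "A \<noteq> {}" "finite A" "card A \<le> 3"
  shows "A \<in> Lk k"
  using assms by (auto simp: Lk_def Suc_le_eq card_gt_0_iff)

lemma card_le3: "card {x, y} \<le> 3" "card {x, y, z} \<le> 3"
  by (simp_all add: card_insert_if)

definition satisfiable :: "lit set set \<Rightarrow> bool" where
  "satisfiable S \<longleftrightarrow> (\<exists>\<nu>. \<forall>C\<in>S. \<exists>l\<in>C. lit_val \<nu> l)"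

text \<open>Since alpha_k enumerates L_k, 3SAT^C_(d k) applied to the characteristic vector of a
  clause set S decides satisfiability of the clauses of S that lie in L_k.\<close>
lemma sat3C_characteristic:
  assumes "admissible_alpha alpha"
  shows "sat3C alpha (d k) (map (\<lambda>c. alpha k (Suc c) \<in> S) [0..<d k])
         \<longleftrightarrow> satisfiable (S \<inter> Lk k)"
proof -
  have onto: "alpha k ` {1..d k} = Lk k"
    using assms bij_betw_imp_surj_on unfolding admissible_alpha_def by blast
  let ?bits = "map (\<lambda>c. alpha k (Suc c) \<in> S) [0..<d k]"
  have bit: "?bits ! (i - 1) \<longleftrightarrow> alpha k i \<in> S" if "i \<in> {1..d k}" for i
    using that by auto
  have "(\<forall>i\<in>{1..d k}. ?bits ! (i - 1) \<longrightarrow> (\<exists>l\<in>alpha k i. lit_val \<nu> l))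
        \<longleftrightarrow> (\<forall>i\<in>{1..d k}. alpha k i \<in> S \<longrightarrow> (\<exists>l\<in>alpha k i. lit_val \<nu> l))" for \<nu>
    using bit by blast
  also have "\<dots> \<nu> \<longleftrightarrow> (\<forall>C \<in> S \<inter> Lk k. \<exists>l\<in>C. lit_val \<nu> l)" for \<nu>
    unfolding onto[symmetric] by auto
  finally show ?thesis
    unfolding sat3C_def Let_def kof_d satisfiable_def by simp
qed

section \<open>Membership: a splitting instruction sequence for 3SAT^C\<close>

text \<open>Truth of a literal under the partial assignment of a branch (unassigned = neither).\<close>
fun lit_true :: "(nat \<Rightarrow> bool option) \<Rightarrow> lit \<Rightarrow> bool" where
  "lit_true \<sigma> (Pos v) = (\<sigma> v = Some True)"
| "lit_true \<sigma> (Neg v) = (\<sigma> v = Some False)"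

fun lit_test :: "lit \<Rightarrow> prim" where
  "lit_test (Pos v) = PosT (Reply v)"
| "lit_test (Neg v) = NegT (Reply v)"

text \<open>Test the literals in turn: a true literal jumps behind the check, otherwise the
  check ends in the termination instruction.\<close>
fun clause_check :: "lit list \<Rightarrow> prim list" where
  "clause_check [] = [Term]"
| "clause_check (l # ls) = [lit_test l, Jump (2 * length ls + 2)] @ clause_check ls"

text \<open>Skip the check of clause ls unless input bit c is set.\<close>
definition clause_block :: "nat \<Rightarrow> lit list \<Rightarrow> prim list" where
  "clause_block c ls = [NegT (Reg (In c) Get), Jump (2 * length ls + 2)] @ clause_check ls"

fun cnf_check :: "(nat \<times> lit list) list \<Rightarrow> prim list" where
  "cnf_check [] = [Plain (Reg Out (Set True)), Term]"
| "cnf_check ((c, ls) # r) = clause_block c ls @ cnf_check r"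

definition selected_sat :: "bool list \<Rightarrow> (nat \<times> lit list) list \<Rightarrow> (nat \<Rightarrow> bool option) \<Rightarrow> bool" where
  "selected_sat b items \<sigma> \<longleftrightarrow> (\<forall>(c, ls)\<in>set items. b ! (c - 1) \<longrightarrow> (\<exists>l\<in>set ls. lit_true \<sigma> l))"

lemma length_clause_check [simp]: "length (clause_check ls) = 2 * length ls + 1"
  by (induction ls) auto

lemma length_clause_block [simp]: "length (clause_block c ls) = 2 * length ls + 3"
  by (simp add: clause_block_def)

lemma lit_test_step:
  assumes "1 \<le> i" "i \<le> length X" "X ! (i - 1) = lit_test l" "\<sigma> (var l) \<noteq> None"
    "sexec X b (if lit_true \<sigma> l then i + 1 else i + 2) \<sigma> t"
  shows "sexec X b i \<sigma> t"
proof -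
  obtain r where r: "\<sigma> (var l) = Some r" using assms(4) by auto
  have instr: "basic_of (X ! (i - 1)) = Some (Reply (var l))" using assms(3) by (cases l) auto
  have reply: "sreply b \<sigma> (Reply (var l)) = Some (r, False)" using r by simp
  have "nxt (X ! (i - 1)) r i = (if lit_true \<sigma> l then i + 1 else i + 2)"
    using assms(3) r by (cases l; cases r) auto
  then have "sexec X b i \<sigma> (False \<or> t)"
    using sexec.sbasic[OF assms(1,2) instr reply, of t] assms(5) by simp
  then show ?thesis by simp
qed

lemma clause_check_sem:
  assumes "X = pre @ clause_check ls @ rest" "\<forall>l\<in>set ls. \<sigma> (var l) \<noteq> None"
    "sexec X b (length pre + length (clause_check ls) + 1) \<sigma> t"
  shows "sexec X b (length pre + 1) \<sigma> ((\<exists>l\<in>set ls. lit_true \<sigma> l) \<and> t)"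
  using assms
proof (induction ls arbitrary: pre)
  case Nil
  then show ?case by (auto intro!: sexec.sterm simp: nth_append)
next
  case (Cons l ls)
  let ?i = "length pre + 1"
  have X: "X = (pre @ [lit_test l, Jump (2 * length ls + 2)]) @ clause_check ls @ rest"
    using Cons.prems by simp
  have at: "X ! (?i - 1) = lit_test l" "X ! (?i + 1 - 1) = Jump (2 * length ls + 2)"
    using X by (auto simp: nth_append)
  have len: "?i + 1 \<le> length X" using X by simp
  show ?case
  proof (cases "lit_true \<sigma> l")
    case True
    have "sexec X b (?i + 1 + (2 * length ls + 2)) \<sigma> t"
      using Cons.prems(3) by (simp add: algebra_simps)
    then have "sexec X b (?i + 1) \<sigma> t"
      by (intro sexec.sjump[OF _ len at(2)]) auto
    then show ?thesis
      using lit_test_step[of ?i X l \<sigma> b t] at len Cons.prems(2) True by auto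
  next
    case False
    have "sexec X b (?i + 2) \<sigma> ((\<exists>l\<in>set ls. lit_true \<sigma> l) \<and> t)"
      using Cons.IH[OF X] Cons.prems(2,3) by (simp add: algebra_simps)
    then show ?thesis
      using lit_test_step[of ?i X l \<sigma>] at len Cons.prems(2) False by auto
  qed
qed

lemma clause_block_sem:
  assumes X: "X = pre @ clause_block c ls @ rest" and c: "1 \<le> c" "c \<le> length b"
    and assigned: "\<forall>l\<in>set ls. \<sigma> (var l) \<noteq> None"
    and cont: "sexec X b (length pre + length (clause_block c ls) + 1) \<sigma> t"
  shows "sexec X b (length pre + 1) \<sigma> ((b ! (c - 1) \<longrightarrow> (\<exists>l\<in>set ls. lit_true \<sigma> l)) \<and> t)"
proof -
  let ?i = "length pre + 1"
  let ?pre = "pre @ [NegT (Reg (In c) Get), Jump (2 * length ls + 2)]"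
  have X': "X = ?pre @ clause_check ls @ rest"
    using X by (simp add: clause_block_def)
  have at: "X ! (?i - 1) = NegT (Reg (In c) Get)" "X ! (?i + 1 - 1) = Jump (2 * length ls + 2)"
    using X' by (auto simp: nth_append)
  have len: "?i + 1 \<le> length X" using X' by simp
  have step: "sexec X b (nxt (X ! (?i - 1)) (b ! (c - 1)) ?i) \<sigma> t' \<Longrightarrow> sexec X b ?i \<sigma> t'" for t'
    using sexec.sbasic[of ?i X "Reg (In c) Get" b \<sigma> "b ! (c - 1)" False] at len c by simp
  show ?thesis
  proof (cases "b ! (c - 1)")
    case False
    have "?i + 1 + (2 * length ls + 2) = length pre + length (clause_block c ls) + 1"
      by simp
    then have "sexec X b (?i + 1 + (2 * length ls + 2)) \<sigma> t"
      using cont by metis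
    then have "sexec X b (?i + 1) \<sigma> t"
      by (intro sexec.sjump[OF _ len at(2)]) auto
    then show ?thesis using step at False by simp
  next
    case True
    have "length ?pre + length (clause_check ls) + 1 = length pre + length (clause_block c ls) + 1"
      by simp
    then have "sexec X b (length ?pre + 1) \<sigma> ((\<exists>l\<in>set ls. lit_true \<sigma> l) \<and> t)"
      using clause_check_sem[OF X' assigned] cont by metis
    moreover have nx: "nxt (X ! (?i - 1)) (b ! (c - 1)) ?i = length ?pre + 1" using at True by simp
    ultimately have "sexec X b ?i \<sigma> ((\<exists>l\<in>set ls. lit_true \<sigma> l) \<and> t)"
      using step[unfolded nx] by blast
    then show ?thesis using True by simp
  qed
qed

lemma cnf_check_sem:
  assumes "X = pre @ cnf_check items"
    "\<forall>(c, ls)\<in>set items. 1 \<le> c \<and> c \<le> length b \<and> (\<forall>l\<in>set ls. \<sigma> (var l) \<noteq> None)"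
  shows "sexec X b (length pre + 1) \<sigma> (selected_sat b items \<sigma>)"
  using assms
proof (induction items arbitrary: pre)
  case Nil
  let ?i = "length pre + 1"
  have at: "X ! (?i - 1) = Plain (Reg Out (Set True))" "X ! (?i + 1 - 1) = Term"
    and len: "?i + 1 \<le> length X"
    using Nil by (auto simp: nth_append)
  have "sexec X b (?i + 1) \<sigma> False" using at len by (intro sexec.sterm) auto
  then have "sexec X b ?i \<sigma> (True \<or> False)"
    using sexec.sbasic[of ?i X "Reg Out (Set True)" b \<sigma> True True False] at len by auto
  then show ?case by (simp add: selected_sat_def)
next
  case (Cons item items)
  obtain c ls where item: "item = (c, ls)" by fastforce
  have X: "X = (pre @ clause_block c ls) @ cnf_check items" using Cons.prems item by simp
  have "sexec X b (length (pre @ clause_block c ls) + 1) \<sigma> (selected_sat b items \<sigma>)"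
    using Cons.IH[OF X] Cons.prems(2) by auto
  then have "sexec X b (length pre + 1) \<sigma>
      ((b ! (c - 1) \<longrightarrow> (\<exists>l\<in>set ls. lit_true \<sigma> l)) \<and> selected_sat b items \<sigma>)"
    using clause_block_sem[of X pre c ls "cnf_check items" b \<sigma>] X Cons.prems(2) item
    by (auto simp: algebra_simps)
  then show ?case using item by (simp add: selected_sat_def)
qed

definition guess_params :: "nat \<Rightarrow> prim list" where
  "guess_params k = map (\<lambda>p. Plain (Split p)) [1..<Suc k]"

lemma length_guess_params [simp]: "length (guess_params k) = k"
  by (simp add: guess_params_def)

definition extends_to :: "nat \<Rightarrow> ((nat \<Rightarrow> bool option) \<Rightarrow> bool) \<Rightarrow> (nat \<Rightarrow> bool option) \<Rightarrow> bool" where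
  "extends_to k G \<sigma> \<longleftrightarrow> (\<exists>\<sigma>'. \<sigma> \<subseteq>\<^sub>m \<sigma>' \<and> dom \<sigma>' = {1..k} \<and> G \<sigma>')"

lemma extends_to_total: "dom \<sigma> = {1..k} \<Longrightarrow> extends_to k G \<sigma> = G \<sigma>"
proof -
  assume dom: "dom \<sigma> = {1..k}"
  have "\<sigma>' = \<sigma>" if "\<sigma> \<subseteq>\<^sub>m \<sigma>'" "dom \<sigma>' = {1..k}" for \<sigma>'
    using that dom by (metis map_le_antisym map_le_def)
  then show ?thesis unfolding extends_to_def using dom by (auto simp: map_le_def)
qed

lemma extends_to_split:
  assumes "\<sigma> p = None" "p \<in> {1..k}"
  shows "extends_to k G \<sigma> \<longleftrightarrow> extends_to k G (\<sigma>(p \<mapsto> True)) \<or> extends_to k G (\<sigma>(p \<mapsto> False))"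
proof
  assume "extends_to k G \<sigma>"
  then obtain \<sigma>' where s: "\<sigma> \<subseteq>\<^sub>m \<sigma>'" "dom \<sigma>' = {1..k}" "G \<sigma>'"
    unfolding extends_to_def by blast
  obtain r where r: "\<sigma>' p = Some r" using s(2) assms(2) by blast
  have "\<sigma>(p \<mapsto> r) \<subseteq>\<^sub>m \<sigma>'" using s(1) r by (auto simp: map_le_def)
  then have "extends_to k G (\<sigma>(p \<mapsto> r))" using s unfolding extends_to_def by blast
  then show "extends_to k G (\<sigma>(p \<mapsto> True)) \<or> extends_to k G (\<sigma>(p \<mapsto> False))" by (cases r) auto
next
  have "\<sigma> \<subseteq>\<^sub>m \<sigma>(p \<mapsto> r)" for r using assms(1) by (auto simp: map_le_def)
  then show "extends_to k G (\<sigma>(p \<mapsto> True)) \<or> extends_to k G (\<sigma>(p \<mapsto> False)) \<Longrightarrow> extends_to k G \<sigma>"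
    unfolding extends_to_def using map_le_trans by blast
qed

lemma guess_params_sem:
  assumes X: "X = guess_params k @ Y"
    and total: "\<And>\<sigma>. dom \<sigma> = {1..k} \<Longrightarrow> sexec X b (k + 1) \<sigma> (G \<sigma>)"
  shows "dd \<le> k \<Longrightarrow> dom \<sigma> = {1..k - dd} \<Longrightarrow> sexec X b (k - dd + 1) \<sigma> (extends_to k G \<sigma>)"
proof (induction dd arbitrary: \<sigma>)
  case 0
  then show ?case using total extends_to_total by simp
next
  case (Suc dd)
  let ?p = "k - dd"
  have kd: "?p = Suc (k - Suc dd)" using Suc.prems(1) by simp
  have at: "X ! (?p - 1) = Plain (Split ?p)" and len: "1 \<le> ?p" "?p \<le> length X"
    using X Suc.prems(1) by (auto simp: nth_append guess_params_def)
  have "?p \<notin> dom \<sigma>" using Suc.prems(2) kd by simp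
  then have none: "\<sigma> ?p = None" by (simp add: domIff)
  have dom: "dom (\<sigma>(?p \<mapsto> r)) = {1..k - dd}" for r using Suc.prems(2) kd by auto
  have "sexec X b (nxt (X ! (?p - 1)) r ?p) (\<sigma>(?p \<mapsto> r)) (extends_to k G (\<sigma>(?p \<mapsto> r)))" for r
  proof -
    have nx: "nxt (X ! (?p - 1)) r ?p = k - dd + 1" using at by simp
    show ?thesis unfolding nx by (rule Suc.IH[OF _ dom[of r]]) (use Suc.prems(1) in simp)
  qed
  then have "sexec X b ?p \<sigma> (extends_to k G (\<sigma>(?p \<mapsto> True)) \<or> extends_to k G (\<sigma>(?p \<mapsto> False)))"
    using sexec.ssplit[OF len, of ?p \<sigma>] at none by simp
  moreover have "?p \<in> {1..k}" using Suc.prems(1) by auto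
  ultimately have "sexec X b ?p \<sigma> (extends_to k G \<sigma>)"
    using extends_to_split[of \<sigma> ?p k G, OF none] by simp
  moreover have "k - Suc dd + 1 = ?p" using kd by simp
  ultimately show ?case by simp
qed

definition clause_list :: "lit set \<Rightarrow> lit list" where
  "clause_list C = (SOME xs. set xs = C \<and> distinct xs)"

lemma clause_list_Lk:
  assumes "C \<in> Lk k"
  shows "set (clause_list C) = C" "length (clause_list C) \<le> 3" "C \<subseteq> lits k"
proof -
  have "set (clause_list C) = C \<and> distinct (clause_list C)"
    unfolding clause_list_def using finite_distinct_list[OF Lk_finite[OF assms]] by (rule someI_ex)
  then show "set (clause_list C) = C" "length (clause_list C) \<le> 3"
    using assms distinct_card by (fastforce simp: Lk_def)+
  show "C \<subseteq> lits k" using assms by (simp add: Lk_def)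
qed

lemma alpha_Lk: "admissible_alpha alpha \<Longrightarrow> c \<in> {1..d k} \<Longrightarrow> alpha k c \<in> Lk k"
  unfolding admissible_alpha_def using bij_betwE by blast

definition sat3C_items :: "(nat \<Rightarrow> nat \<Rightarrow> lit set) \<Rightarrow> nat \<Rightarrow> (nat \<times> lit list) list" where
  "sat3C_items alpha k = map (\<lambda>c. (c, clause_list (alpha k c))) [1..<Suc (d k)]"

definition sat3C_prog :: "(nat \<Rightarrow> nat \<Rightarrow> lit set) \<Rightarrow> nat \<Rightarrow> iseq" where
  "sat3C_prog alpha n = guess_params (kof n) @ cnf_check (sat3C_items alpha (kof n))"

lemma sat3C_items_mem:
  "(c, ls) \<in> set (sat3C_items alpha k) \<longleftrightarrow> c \<in> {1..d k} \<and> ls = clause_list (alpha k c)"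
  by (auto simp: sat3C_items_def)

lemma ball_sat3C_items:
  "(\<forall>(c, ls)\<in>set (sat3C_items alpha k). P c ls) \<longleftrightarrow> (\<forall>c\<in>{1..d k}. P c (clause_list (alpha k c)))"
  by (auto simp: sat3C_items_def)

lemma sat3C_items_lits:
  assumes "admissible_alpha alpha" "(c, ls) \<in> set (sat3C_items alpha k)"
  shows "c \<in> {1..d k}" "set ls = alpha k c" "length ls \<le> 3" "set ls \<subseteq> lits k"
  using clause_list_Lk[OF alpha_Lk[OF assms(1)]] assms(2) by (auto simp: sat3C_items_mem)

lemma length_cnf_check:
  "\<forall>(c, ls)\<in>set items. length ls \<le> 3 \<Longrightarrow> length (cnf_check items) \<le> 9 * length items + 2"
  by (induction items rule: cnf_check.induct) auto

lemma cnf_check_nonempty: "cnf_check items \<noteq> []"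
  by (induction items rule: cnf_check.induct) (auto simp: clause_block_def)

lemma basics_clause_check: "basics (clause_check ls) \<subseteq> {Reply (var l) | l. l \<in> set ls}"
proof (induction ls)
  case Nil
  then show ?case by (simp add: basics_def)
next
  case (Cons l ls)
  have "basic_of (lit_test l) = Some (Reply (var l))" by (cases l) auto
  then show ?case using Cons by (auto simp: basics_Cons)
qed

lemma basics_cnf_check:
  "\<forall>(c, ls)\<in>set items. 1 \<le> c \<and> (\<forall>l\<in>set ls. 1 \<le> var l) \<Longrightarrow>
   basics (cnf_check items) \<subseteq> {Reg (In i) Get | i. i \<ge> 1} \<union> {Reg Out (Set True)} \<union> {Reply i | i. i \<ge> 1}"
proof (induction items rule: cnf_check.induct)
  case 1
  then show ?case by (simp add: basics_Cons basics_def)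
next
  case (2 c ls r)
  then show ?case using basics_clause_check[of ls]
    by (auto simp: clause_block_def basics_append basics_Cons)
qed

lemma basics_guess_params: "basics (guess_params k) \<subseteq> {Split i | i. i \<ge> 1}"
  by (auto simp: basics_def guess_params_def)

lemma sat3C_prog_SIS:
  assumes "admissible_alpha alpha"
  shows "sat3C_prog alpha n \<in> SIS_br"
proof -
  let ?items = "sat3C_items alpha (kof n)"
  have "\<forall>(c, ls)\<in>set ?items. 1 \<le> c \<and> (\<forall>l\<in>set ls. 1 \<le> var l)"
    using sat3C_items_lits[OF assms] var_lits by fastforce
  note basics_cnf_check[OF this]
  then show ?thesis
    using basics_guess_params[of "kof n"] cnf_check_nonempty[of ?items] basics_guess_params[of "kof n"] cnf_check_nonempty[of ?items]
    by (auto simp: SIS_br_def sat3C_prog_def basics_append)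
qed

lemma sat3C_prog_length:
  assumes "admissible_alpha alpha"
  shows "length (sat3C_prog alpha n) \<le> 10 * n + 2"
proof -
  let ?k = "kof n"
  have "\<forall>(c, ls)\<in>set (sat3C_items alpha ?k). length ls \<le> 3"
    using sat3C_items_lits(3)[OF assms] by blast
  then have "length (cnf_check (sat3C_items alpha ?k)) \<le> 9 * length (sat3C_items alpha ?k) + 2"
    by (rule length_cnf_check)
  moreover have "length (sat3C_items alpha ?k) = d ?k" by (simp add: sat3C_items_def)
  moreover have "?k \<le> d ?k" "d ?k \<le> n" using d_lower_bound kof_bounds by auto
  ultimately show ?thesis by (simp add: sat3C_prog_def)
qed

lemma lit_true_total:
  assumes "dom \<sigma> = {1..k}" "var l \<in> {1..k}"
  shows "lit_true \<sigma> l \<longleftrightarrow> lit_val (\<lambda>v. \<sigma> v = Some True) l"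
proof -
  obtain r where "\<sigma> (var l) = Some r" using assms by blast
  then show ?thesis by (cases l; cases r) auto
qed

lemma sat3C_iff_extends:
  fixes n :: nat
  assumes adm: "admissible_alpha alpha"
  defines "k \<equiv> kof n"
  shows "sat3C alpha n b \<longleftrightarrow> extends_to k (selected_sat b (sat3C_items alpha k)) Map.empty"
proof -
  let ?items = "sat3C_items alpha k"
  have vars: "var l \<in> {1..k}" if "(c, ls) \<in> set ?items" "l \<in> set ls" for c ls l
    using sat3C_items_lits(4)[OF adm that(1)] that(2) var_lits by blast
  have "sat3C alpha n b \<longleftrightarrow> (\<exists>\<tau>. \<forall>(c, ls)\<in>set ?items. b ! (c - 1) \<longrightarrow> (\<exists>l\<in>set ls. lit_val \<tau> l))"
  proof -
    have "set (clause_list (alpha k c)) = alpha k c" if "c \<in> {1..d k}" for c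
      using clause_list_Lk(1)[OF alpha_Lk[OF adm that]] .
    then show ?thesis
      unfolding sat3C_def Let_def k_def[symmetric] ball_sat3C_items by auto
  qed
  also have "\<dots> \<longleftrightarrow> (\<exists>\<sigma>. dom \<sigma> = {1..k} \<and> selected_sat b ?items \<sigma>)"
  proof
    assume "\<exists>\<tau>. \<forall>(c, ls)\<in>set ?items. b ! (c - 1) \<longrightarrow> (\<exists>l\<in>set ls. lit_val \<tau> l)"
    then obtain \<tau> where \<tau>: "\<forall>(c, ls)\<in>set ?items. b ! (c - 1) \<longrightarrow> (\<exists>l\<in>set ls. lit_val \<tau> l)"
      by blast
    define \<sigma> where "\<sigma> = (\<lambda>v. if v \<in> {1..k} then Some (\<tau> v) else None)"
    have dom: "dom \<sigma> = {1..k}" by (auto simp: \<sigma>_def split: if_splits)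
    have "lit_val \<tau> l = lit_true \<sigma> l" if "var l \<in> {1..k}" for l
      using lit_true_total[OF dom that] that by (cases l) (auto simp: \<sigma>_def)
    then have "selected_sat b ?items \<sigma>"
      using \<tau> vars unfolding selected_sat_def by fastforce
    then show "\<exists>\<sigma>. dom \<sigma> = {1..k} \<and> selected_sat b ?items \<sigma>" using dom by blast
  next
    assume "\<exists>\<sigma>. dom \<sigma> = {1..k} \<and> selected_sat b ?items \<sigma>"
    then obtain \<sigma> where dom: "dom \<sigma> = {1..k}" and sat: "selected_sat b ?items \<sigma>" by blast
    have "lit_true \<sigma> l = lit_val (\<lambda>v. \<sigma> v = Some True) l" if "var l \<in> {1..k}" for l
      using lit_true_total[OF dom that] .
    then have "\<forall>(c, ls)\<in>set ?items. b ! (c - 1) \<longrightarrow> (\<exists>l\<in>set ls. lit_val (\<lambda>v. \<sigma> v = Some True) l)"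
      using sat vars unfolding selected_sat_def by fastforce
    then show "\<exists>\<tau>. \<forall>(c, ls)\<in>set ?items. b ! (c - 1) \<longrightarrow> (\<exists>l\<in>set ls. lit_val \<tau> l)" by blast
  qed
  also have "\<dots> \<longleftrightarrow> extends_to k (selected_sat b ?items) Map.empty"
    by (simp add: extends_to_def)
  finally show ?thesis .
qed

lemma sat3C_prog_computes:
  assumes adm: "admissible_alpha alpha"
  shows "split_computes (sat3C_prog alpha n) n (sat3C alpha n)"
proof -
  let ?k = "kof n"
  let ?X = "sat3C_prog alpha n"
  let ?items = "sat3C_items alpha ?k"
  have "sexec ?X b 1 Map.empty (sat3C alpha n b)" if len: "length b = n" for b
  proof -
    have total: "sexec ?X b (?k + 1) \<sigma> (selected_sat b ?items \<sigma>)" if dom: "dom \<sigma> = {1..?k}" for \<sigma>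
    proof -
      have "\<forall>(c, ls)\<in>set ?items. 1 \<le> c \<and> c \<le> length b \<and> (\<forall>l\<in>set ls. \<sigma> (var l) \<noteq> None)"
        using sat3C_items_lits[OF adm] var_lits dom len kof_bounds[of n]
        by (fastforce simp: domIff[symmetric])
      then show ?thesis
        using cnf_check_sem[of ?X "guess_params ?k"] by (simp add: sat3C_prog_def)
    qed
    have "sexec ?X b (?k - ?k + 1) Map.empty (extends_to ?k (selected_sat b ?items) Map.empty)"
      by (rule guess_params_sem[OF _ total]) (auto simp: sat3C_prog_def)
    then show ?thesis using sat3C_iff_extends[OF adm] by simp
  qed
  then show ?thesis using sat3C_prog_SIS[OF adm] by (auto simp: split_computes_def)
qed

theorem sat3C_in_P_lsis:
  assumes "admissible_alpha alpha"
  shows "sat3C alpha \<in> P_lsis"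
proof -
  have "split_computes (sat3C_prog alpha n) n (sat3C alpha n)
        \<and> length (sat3C_prog alpha n) \<le> poly [:2, 10:] n" for n
    using sat3C_prog_computes[OF assms] sat3C_prog_length[OF assms, of n] by (simp add: mult.commute)
  then show ?thesis unfolding P_lsis_def by blast
qed

section \<open>Hardness: clauses describing an accepting branch\<close>

text \<open>Fix a splitting instruction sequence X of length L.  Propositional variable i \<le> L
  stands for "instruction i is executed on the branch", and each parameter p of X is
  represented by the variable param_var X p, which lies in (L, 2L].\<close>

definition params :: "iseq \<Rightarrow> nat set" where
  "params X = {p. Split p \<in> basics X \<or> Reply p \<in> basics X}"

definition param_var :: "iseq \<Rightarrow> nat \<Rightarrow> nat" where
  "param_var X p = length X + 1 + card {q \<in> params X. q < p}"

definition param_of :: "prim \<Rightarrow> nat" where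
  "param_of u = (case basic_of u of Some (Split p) \<Rightarrow> p | Some (Reply p) \<Rightarrow> p | _ \<Rightarrow> 0)"

lemma params_subset: "params X \<subseteq> param_of ` set X"
proof
  fix p assume "p \<in> params X"
  then obtain u where u: "u \<in> set X" "basic_of u = Some (Split p) \<or> basic_of u = Some (Reply p)"
    unfolding params_def basics_def by blast
  then have "param_of u = p" by (auto simp: param_of_def)
  then show "p \<in> param_of ` set X" using u(1) by blast
qed

lemma params_finite: "finite (params X)"
  using finite_subset[OF params_subset] by simp

lemma card_params: "card (params X) \<le> length X"
proof -
  have "card (params X) \<le> card (param_of ` set X)"
    using params_subset by (intro card_mono) auto
  also have "\<dots> \<le> length X"
    using card_image_le card_length le_trans by blast
  finally show ?thesis .
qed

lemma params_intro:
  assumes "1 \<le> i" "i \<le> length X"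
    "basic_of (X ! (i - 1)) = Some (Split p) \<or> basic_of (X ! (i - 1)) = Some (Reply p)"
  shows "p \<in> params X"
  using assms nth_mem[of "i - 1" X] unfolding params_def basics_def by fastforce

lemma param_var_gt: "length X < param_var X p"
  by (simp add: param_var_def)

lemma param_var_le: "p \<in> params X \<Longrightarrow> param_var X p \<le> 2 * length X"
proof -
  assume p: "p \<in> params X"
  have "card {q \<in> params X. q < p} < card (params X)"
    using p params_finite by (intro psubset_card_mono) auto
  then show ?thesis using card_params[of X] by (simp add: param_var_def)
qed

lemma param_var_inj: "inj_on (param_var X) (params X)"
proof -
  have "card {q \<in> params X. q < p} < card {q \<in> params X. q < p'}"
    if "p \<in> params X" "p < p'" for p p'
    using that params_finite by (intro psubset_card_mono) auto
  then have "strict_mono_on (params X) (param_var X)"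
    by (auto simp: strict_mono_on_def param_var_def)
  then show ?thesis by (rule strict_mono_on_imp_inj_on)
qed

text \<open>Some clauses are only present when an input bit has a certain value.\<close>
datatype guard = Always | IfT nat | IfF nat

fun guard_holds :: "bool list \<Rightarrow> guard \<Rightarrow> bool" where
  "guard_holds b Always = True"
| "guard_holds b (IfT j) = b ! (j - 1)"
| "guard_holds b (IfF j) = (\<not> b ! (j - 1))"

fun guard_ok :: "nat \<Rightarrow> guard \<Rightarrow> bool" where
  "guard_ok n Always = True"
| "guard_ok n (IfT j) = (1 \<le> j \<and> j \<le> n)"
| "guard_ok n (IfF j) = (1 \<le> j \<and> j \<le> n)"

text \<open>If instruction i (= u) is executed, the branch continues according to the value of
  parameter p.\<close>
definition branch_clauses :: "iseq \<Rightarrow> nat \<Rightarrow> prim \<Rightarrow> nat \<Rightarrow> (lit set \<times> guard) list" where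
  "branch_clauses X i u p = [({Neg i, Neg (param_var X p), Pos (nxt u True i)}, Always),
                             ({Neg i, Pos (param_var X p), Pos (nxt u False i)}, Always)]"

fun basic_clauses :: "iseq \<Rightarrow> nat \<Rightarrow> nat \<Rightarrow> prim \<Rightarrow> basic \<Rightarrow> (lit set \<times> guard) list" where
  "basic_clauses X n i u (Reg (In j) Get) = (if 1 \<le> j \<and> j \<le> n then
      [({Neg i, Pos (nxt u True i)}, IfT j), ({Neg i, Pos (nxt u False i)}, IfF j)] else [])"
| "basic_clauses X n i u (Split p) = branch_clauses X i u p"
| "basic_clauses X n i u (Reply p) = branch_clauses X i u p"
| "basic_clauses X n i u _ = []"

text \<open>Termination is forbidden (the branch must execute out.set:T), a jump is followed.\<close>
fun prim_clauses :: "iseq \<Rightarrow> nat \<Rightarrow> nat \<Rightarrow> prim \<Rightarrow> (lit set \<times> guard) list" where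
  "prim_clauses X n i Term = [({Neg i}, Always)]"
| "prim_clauses X n i (Jump l) = [({Neg i, Pos (i + l)}, Always)]"
| "prim_clauses X n i (Plain a) = basic_clauses X n i (Plain a) a"
| "prim_clauses X n i (PosT a) = basic_clauses X n i (PosT a) a"
| "prim_clauses X n i (NegT a) = basic_clauses X n i (NegT a) a"

definition instr_clauses :: "iseq \<Rightarrow> nat \<Rightarrow> nat \<Rightarrow> (lit set \<times> guard) list" where
  "instr_clauses X n i = prim_clauses X n i (X ! (i - 1))"

definition all_clauses :: "iseq \<Rightarrow> nat \<Rightarrow> (lit set \<times> guard) list" where
  "all_clauses X n = ({Pos 1}, Always) # concat (map (instr_clauses X n) [1..<Suc (length X)])"

definition active_clauses :: "iseq \<Rightarrow> nat \<Rightarrow> bool list \<Rightarrow> lit set set" where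
  "active_clauses X n b = {C. \<exists>g. (C, g) \<in> set (all_clauses X n) \<and> guard_holds b g}"

lemma instr_clauses_basic:
  "basic_of (X ! (i - 1)) = Some a \<Longrightarrow> instr_clauses X n i = basic_clauses X n i (X ! (i - 1)) a"
  by (cases "X ! (i - 1)") (auto simp: instr_clauses_def)

lemma instr_clauses_active:
  assumes "(C, g) \<in> set (instr_clauses X n i)" "1 \<le> i" "i \<le> length X" "guard_holds b g"
  shows "C \<in> active_clauses X n b"
  using assms unfolding active_clauses_def all_clauses_def
  by (auto simp del: upt_Suc intro!: bexI[of _ i])

lemma all_clauses_cases:
  assumes "(C, g) \<in> set (all_clauses X n)"
  obtains "C = {Pos 1}" "g = Always" | j where "j \<in> {1..length X}" "(C, g) \<in> set (instr_clauses X n j)"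
  using assms unfolding all_clauses_def by (auto simp del: upt_Suc simp: less_Suc_eq_le)

lemma basic_clauses_shape:
  "x \<in> set (basic_clauses X n i u a) \<Longrightarrow> Neg i \<in> fst x \<and> guard_ok n (snd x) \<and>
   (\<forall>l\<in>fst x. l = Neg i \<or> (\<exists>y. l = Pos y) \<or> (\<exists>p. l = Neg (param_var X p)))"
  by (induction X n i u a rule: basic_clauses.induct) (auto simp: branch_clauses_def split: if_splits)

lemma instr_clauses_shape:
  "x \<in> set (instr_clauses X n i) \<Longrightarrow> Neg i \<in> fst x \<and> guard_ok n (snd x) \<and>
   (\<forall>l\<in>fst x. l = Neg i \<or> (\<exists>y. l = Pos y) \<or> (\<exists>p. l = Neg (param_var X p)))"
  unfolding instr_clauses_def by (cases "X ! (i - 1)") (auto dest: basic_clauses_shape)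

lemma all_clauses_guard_ok:
  assumes "(C, g) \<in> set (all_clauses X n)"
  shows "guard_ok n g"
  using assms by (cases rule: all_clauses_cases) (auto dest: instr_clauses_shape)

lemma length_instr_clauses: "length (instr_clauses X n i) \<le> 2"
proof -
  have "length (basic_clauses X n i u a) \<le> 2" for u a
    by (induction X n i u a rule: basic_clauses.induct) (auto simp: branch_clauses_def)
  then show ?thesis unfolding instr_clauses_def by (cases "X ! (i - 1)") auto
qed

lemma length_all_clauses: "length (all_clauses X n) \<le> 2 * length X + 1"
proof -
  have "length (concat (map (instr_clauses X n) xs)) \<le> 2 * length xs" for xs
  proof (induction xs)
    case (Cons x xs)
    then show ?case using length_instr_clauses[of X n x] by simp
  qed simp
  from this[of "[1..<Suc (length X)]"] show ?thesis
    unfolding all_clauses_def by (simp del: upt_Suc)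
qed

text \<open>The assignment read off a branch: instruction variables are true exactly on the set
  S of visited instructions, parameter variables carry the values tau of the parameters.\<close>
definition trace_assignment :: "iseq \<Rightarrow> (nat \<Rightarrow> bool) \<Rightarrow> nat set \<Rightarrow> nat \<Rightarrow> bool" where
  "trace_assignment X \<tau> S x =
     (if x \<le> length X then x \<in> S else \<tau> (the_inv_into (params X) (param_var X) x))"

lemma trace_assignment_param: "p \<in> params X \<Longrightarrow> trace_assignment X \<tau> S (param_var X p) = \<tau> p"
  using param_var_gt[of X p] the_inv_into_f_f[OF param_var_inj] by (simp add: trace_assignment_def)

definition instr_sat :: "iseq \<Rightarrow> nat \<Rightarrow> bool list \<Rightarrow> (nat \<Rightarrow> bool) \<Rightarrow> nat set \<Rightarrow> nat \<Rightarrow> bool" where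
  "instr_sat X n b \<tau> S j \<longleftrightarrow> (\<forall>(C, g)\<in>set (instr_clauses X n j).
      guard_holds b g \<longrightarrow> (\<exists>l\<in>C. lit_val (trace_assignment X \<tau> S) l))"

text \<open>Invariant for the induction over the execution tree: a trace through instruction
  i whose parameter values agree with the branch assignment sigma.\<close>
definition good_trace :: "iseq \<Rightarrow> nat \<Rightarrow> bool list \<Rightarrow> (nat \<Rightarrow> bool option) \<Rightarrow> nat \<Rightarrow>
    (nat \<Rightarrow> bool) \<Rightarrow> nat set \<Rightarrow> bool" where
  "good_trace X n b \<sigma> i \<tau> S \<longleftrightarrow> (\<forall>p r. \<sigma> p = Some r \<longrightarrow> \<tau> p = r) \<and>
     i \<in> S \<and> S \<subseteq> {1..length X} \<and> (\<forall>j\<in>S. instr_sat X n b \<tau> S j)"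

text \<open>Visiting more instructions keeps the clauses of a visited instruction satisfied:
  its only negative instruction literal is not-v_j.\<close>
lemma instr_sat_mono:
  assumes "j \<in> S" "S \<subseteq> S'" "S' \<subseteq> {1..length X}" "instr_sat X n b \<tau> S j"
  shows "instr_sat X n b \<tau> S' j"
  unfolding instr_sat_def
proof (intro ballI impI, clarify)
  fix C g assume x: "(C, g) \<in> set (instr_clauses X n j)" "guard_holds b g"
  then obtain l where l: "l \<in> C" "lit_val (trace_assignment X \<tau> S) l"
    using assms(4) unfolding instr_sat_def by blast
  have "j \<le> length X" using assms(1-3) by auto
  moreover have "l = Neg j \<or> (\<exists>y. l = Pos y) \<or> (\<exists>p. l = Neg (param_var X p))"
    using instr_clauses_shape[OF x(1)] l(1) by auto
  ultimately have "lit_val (trace_assignment X \<tau> S') l"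
    using l(2) assms(1,2)
    by (auto simp: trace_assignment_def param_var_gt[folded not_le] split: if_splits)
  then show "\<exists>l\<in>C. lit_val (trace_assignment X \<tau> S') l" using l(1) by blast
qed

lemma good_trace_extend:
  assumes "good_trace X n b \<sigma>' i' \<tau> S" "1 \<le> i" "i \<le> length X"
    "\<forall>p r. \<sigma> p = Some r \<longrightarrow> \<tau> p = r" "instr_sat X n b \<tau> (insert i S) i"
  shows "good_trace X n b \<sigma> i \<tau> (insert i S)"
  using assms instr_sat_mono[of _ S "insert i S" X n b \<tau>] unfolding good_trace_def by auto

lemma branch_clauses_sat:
  assumes "p \<in> params X" "\<tau> p = r" "nxt u r i \<in> S" "S \<subseteq> {1..length X}"
  shows "\<forall>(C, g)\<in>set (branch_clauses X i u p). \<exists>l\<in>C. lit_val (trace_assignment X \<tau> S) l"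
proof -
  have "trace_assignment X \<tau> S (nxt u r i)" using assms(3,4) by (auto simp: trace_assignment_def)
  then show ?thesis using trace_assignment_param[OF assms(1)] assms(2)
    unfolding branch_clauses_def by (cases r) auto
qed

lemma basic_step_sat:
  assumes i: "1 \<le> i" "i \<le> length X" and a: "basic_of (X ! (i - 1)) = Some a"
    and reply: "sreply b \<sigma> a = Some (r, False)" and len: "length b = n"
    and agree: "\<forall>p r. \<sigma> p = Some r \<longrightarrow> \<tau> p = r"
    and next_in: "nxt (X ! (i - 1)) r i \<in> S" and S: "S \<subseteq> {1..length X}"
  shows "instr_sat X n b \<tau> S i"
proof -
  have nx: "trace_assignment X \<tau> S (nxt (X ! (i - 1)) r i)"
    using next_in S by (auto simp: trace_assignment_def)
  from sreply_cases[OF reply] show ?thesis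
  proof (elim disjE exE conjE)
    fix j assume "a = Reg (In j) Get" "1 \<le> j" "j \<le> length b" "r = b ! (j - 1)"
    then show ?thesis unfolding instr_sat_def instr_clauses_basic[OF a] using nx len
      by (cases r) auto
  next
    fix p assume p: "a = Reply p" "\<sigma> p = Some r"
    have "p \<in> params X" using params_intro[OF i] a p(1) by auto
    moreover have "\<tau> p = r" using agree p(2) by blast
    ultimately show ?thesis
      using branch_clauses_sat[of p X \<tau> r, OF _ _ next_in S] p(1)
      unfolding instr_sat_def instr_clauses_basic[OF a] by auto
  qed simp
qed

lemma accepting_branch_trace:
  assumes "sexec X b i \<sigma> t" "length b = n" "t"
  shows "\<exists>\<tau> S. good_trace X n b \<sigma> i \<tau> S"
  using assms(1,3)
proof (induction rule: sexec.induct)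
  case (sterm i \<sigma>)
  then show ?case by simp
next
  case (sjump i l \<sigma> t)
  then obtain \<tau> S where tr: "good_trace X n b \<sigma> (i + l) \<tau> S" by blast
  have agree: "\<forall>p r. \<sigma> p = Some r \<longrightarrow> \<tau> p = r" using tr by (simp add: good_trace_def)
  have "instr_sat X n b \<tau> (insert i S) i"
    using tr sjump.hyps(3)
    by (auto simp: good_trace_def instr_sat_def instr_clauses_def trace_assignment_def)
  then show ?case using good_trace_extend[OF tr sjump.hyps(1,2) agree] by blast
next
  case (sbasic i a \<sigma> r w t)
  show ?case
  proof (cases w)
    case True
    then have "a = Reg Out (Set True)" using sreply_cases[OF sbasic.hyps(4)] by auto
    then have "instr_sat X n b \<tau> {i} i" for \<tau>
      using instr_clauses_basic[OF sbasic.hyps(3)] by (simp add: instr_sat_def)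
    then have "good_trace X n b \<sigma> i (\<lambda>p. case \<sigma> p of Some r \<Rightarrow> r | None \<Rightarrow> False) {i}"
      using sbasic.hyps(1,2) by (auto simp: good_trace_def)
    then show ?thesis by blast
  next
    case False
    then obtain \<tau> S where tr: "good_trace X n b \<sigma> (nxt (X ! (i - 1)) r i) \<tau> S"
      using sbasic.IH sbasic.prems by blast
    have agree: "\<forall>p r. \<sigma> p = Some r \<longrightarrow> \<tau> p = r" using tr by (simp add: good_trace_def)
    have "instr_sat X n b \<tau> (insert i S) i"
      using basic_step_sat[OF sbasic.hyps(1-3) _ assms(2) agree] sbasic.hyps(1,2,4) tr False
      by (auto simp: good_trace_def)
    then show ?thesis using good_trace_extend[OF tr sbasic.hyps(1,2) agree] by blast
  qed
next
  case (ssplit i p \<sigma> t1 t2)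
  have p: "p \<in> params X" using params_intro[OF ssplit.hyps(1,2)] ssplit.hyps(3) by auto
  obtain r where "if r then t1 else t2" using ssplit.prems by (metis (full_types))
  then have "\<exists>\<tau> S. good_trace X n b (\<sigma>(p \<mapsto> r)) (nxt (X ! (i - 1)) r i) \<tau> S"
    using ssplit.IH by (cases r) (simp_all only: if_True if_False)
  then obtain \<tau> S where tr: "good_trace X n b (\<sigma>(p \<mapsto> r)) (nxt (X ! (i - 1)) r i) \<tau> S"
    by blast
  then have val: "\<tau> p = r" by (simp add: good_trace_def)
  have agree: "\<forall>q s. \<sigma> q = Some s \<longrightarrow> \<tau> q = s"
    using tr ssplit.hyps(4) unfolding good_trace_def by (metis fun_upd_other option.distinct(1))
  have "instr_sat X n b \<tau> (insert i S) i"
    using branch_clauses_sat[of p X \<tau> r "X ! (i - 1)" i "insert i S", OF p val] tr ssplit.hyps(1,2)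
    unfolding instr_sat_def instr_clauses_basic[OF ssplit.hyps(3)] by (auto simp: good_trace_def)
  then show ?case using good_trace_extend[OF tr ssplit.hyps(1,2) agree] by blast
qed

lemma model_instr_clause:
  assumes model: "\<forall>C\<in>active_clauses X n b \<inter> Lk (2 * length X). \<exists>l\<in>C. lit_val \<nu> l"
    and C: "(C, g) \<in> set (instr_clauses X n i)" "1 \<le> i" "i \<le> length X" "guard_holds b g"
      "C \<in> Lk (2 * length X)"
  shows "\<exists>l\<in>C. lit_val \<nu> l"
  using model C instr_clauses_active[OF C(1-4)] by blast

lemma model_branch_step:
  assumes model: "\<forall>C\<in>active_clauses X n b \<inter> Lk (2 * length X). \<exists>l\<in>C. lit_val \<nu> l"
    and sub: "set (branch_clauses X i u p) \<subseteq> set (instr_clauses X n i)" and p: "p \<in> params X"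
    and i: "1 \<le> i" "i \<le> length X" and next_valid: "1 \<le> nxt u r i" "nxt u r i \<le> length X"
    and val: "\<nu> (param_var X p) = r" "\<nu> i"
  shows "\<nu> (nxt u r i)"
proof -
  have pv: "1 \<le> param_var X p" "param_var X p \<le> 2 * length X"
    using param_var_gt[of X p] param_var_le[OF p] by auto
  let ?C = "if r then {Neg i, Neg (param_var X p), Pos (nxt u True i)}
            else {Neg i, Pos (param_var X p), Pos (nxt u False i)}"
  have mem: "(?C, Always) \<in> set (instr_clauses X n i)" using sub by (auto simp: branch_clauses_def)
  have lk: "?C \<in> Lk (2 * length X)"
    using i next_valid pv by (cases r) (auto intro!: Lk_intro card_le3 Neg_lits Pos_lits)
  have "\<exists>l\<in>?C. lit_val \<nu> l" using model_instr_clause[OF model mem i _ lk] by simp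
  then show ?thesis using val by (cases r) auto
qed

lemma model_basic_step:
  assumes model: "\<forall>C\<in>active_clauses X n b \<inter> Lk (2 * length X). \<exists>l\<in>C. lit_val \<nu> l"
    and i: "1 \<le> i" "i \<le> length X" and a: "basic_of (X ! (i - 1)) = Some a"
    and reply: "sreply b \<sigma> a = Some (r, False)" and len: "length b = n"
    and agree: "\<forall>p r. \<sigma> p = Some r \<longrightarrow> \<nu> (param_var X p) = r" and at_i: "\<nu> i"
    and target: "1 \<le> nxt (X ! (i - 1)) r i" "nxt (X ! (i - 1)) r i \<le> length X"
  shows "\<nu> (nxt (X ! (i - 1)) r i)"
proof -
  let ?u = "X ! (i - 1)"
  have clauses: "instr_clauses X n i = basic_clauses X n i ?u a"
    by (rule instr_clauses_basic[OF a])
  from sreply_cases[OF reply] show ?thesis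
  proof (elim disjE exE conjE)
    fix j assume j: "a = Reg (In j) Get" "1 \<le> j" "j \<le> length b" "r = b ! (j - 1)"
    let ?C = "{Neg i, Pos (nxt ?u r i)}"
    let ?g = "if r then IfT j else IfF j"
    have mem: "(?C, ?g) \<in> set (instr_clauses X n i)" using clauses j len by (cases r) auto
    have lk: "?C \<in> Lk (2 * length X)"
      using i target by (auto intro!: Lk_intro Neg_lits Pos_lits card_le3)
    have guard: "guard_holds b ?g" using j by (cases r) auto
    have "\<exists>l'\<in>?C. lit_val \<nu> l'"
      using model_instr_clause[OF model mem i guard lk] .
    then show ?thesis using at_i by auto
  next
    fix p assume p: "a = Reply p" "\<sigma> p = Some r"
    have param: "p \<in> params X" using params_intro[OF i] a p(1) by auto
    have val: "\<nu> (param_var X p) = r" using agree p(2) by blast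
    show ?thesis
      using model_branch_step[OF model _ param i target val at_i] clauses p(1) by simp
  qed simp
qed

lemma agreement_update:
  assumes "\<forall>q s. \<sigma> q = Some s \<longrightarrow> \<nu> (f q) = s"
  shows "\<forall>q s. (\<sigma>(p \<mapsto> \<nu> (f p))) q = Some s \<longrightarrow> \<nu> (f q) = s"
proof (intro allI impI)
  fix q s assume upd: "(\<sigma>(p \<mapsto> \<nu> (f p))) q = Some s"
  show "\<nu> (f q) = s"
  proof (cases "q = p")
    case True
    then show ?thesis using upd by simp
  next
    case False
    then show ?thesis using upd assms by simp
  qed
qed

lemma model_accepting_branch:
  assumes "sexec X b i \<sigma> t" "length b = n"
    and model: "\<forall>C\<in>active_clauses X n b \<inter> Lk (2 * length X). \<exists>l\<in>C. lit_val \<nu> l"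
  shows "(\<forall>p r. \<sigma> p = Some r \<longrightarrow> \<nu> (param_var X p) = r) \<Longrightarrow> \<nu> i \<Longrightarrow> t"
  using assms(1)
proof (induction rule: sexec.induct)
  case (sterm i \<sigma>)
  have mem: "({Neg i}, Always) \<in> set (instr_clauses X n i)"
    using sterm.hyps(3) by (simp add: instr_clauses_def)
  have lk: "{Neg i} \<in> Lk (2 * length X)"
    using sterm.hyps(1,2) by (auto intro!: Lk_intro Neg_lits)
  have "\<exists>l\<in>{Neg i}. lit_val \<nu> l"
    using model_instr_clause[OF model mem sterm.hyps(1,2) _ lk] by simp
  then show ?case using sterm.prems by simp
next
  case (sjump i l \<sigma> t)
  have target: "1 \<le> i + l" "i + l \<le> length X" using sexec_counter_valid[OF sjump.hyps(5)] by auto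
  have mem: "({Neg i, Pos (i + l)}, Always) \<in> set (instr_clauses X n i)"
    using sjump.hyps(3) by (simp add: instr_clauses_def)
  have lk: "{Neg i, Pos (i + l)} \<in> Lk (2 * length X)"
    using sjump.hyps(1,2) target by (auto intro!: Lk_intro Neg_lits Pos_lits card_le3)
  have "\<exists>l'\<in>{Neg i, Pos (i + l)}. lit_val \<nu> l'"
    using model_instr_clause[OF model mem sjump.hyps(1,2) _ lk] by simp
  then show ?case using sjump.IH sjump.prems by auto
next
  case (sbasic i a \<sigma> r w t)
  show ?case
  proof (cases w)
    case False
    have "1 \<le> nxt (X ! (i - 1)) r i" "nxt (X ! (i - 1)) r i \<le> length X"
      using sexec_counter_valid[OF sbasic.hyps(5)] by auto
    then have "\<nu> (nxt (X ! (i - 1)) r i)"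
      using model_basic_step[OF model sbasic.hyps(1-3) _ assms(2) sbasic.prems] sbasic.hyps(4) False
      by simp
    then show ?thesis using sbasic.IH sbasic.prems by blast
  qed simp
next
  case (ssplit i p \<sigma> t1 t2)
  let ?u = "X ! (i - 1)"
  let ?r = "\<nu> (param_var X p)"
  have p: "p \<in> params X" using params_intro[OF ssplit.hyps(1,2)] ssplit.hyps(3) by auto
  have clauses: "instr_clauses X n i = basic_clauses X n i ?u (Split p)"
    by (rule instr_clauses_basic[OF ssplit.hyps(3)])
  have target: "1 \<le> nxt ?u ?r i" "nxt ?u ?r i \<le> length X"
    using sexec_counter_valid[OF ssplit.hyps(5)] sexec_counter_valid[OF ssplit.hyps(6)]
    by (cases ?r; auto)+
  have next_true: "\<nu> (nxt ?u ?r i)"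
    using model_branch_step[OF model _ p ssplit.hyps(1,2) target] clauses ssplit.prems(2) by simp
  have agree: "\<forall>q s. (\<sigma>(p \<mapsto> ?r)) q = Some s \<longrightarrow> \<nu> (param_var X q) = s"
    using agreement_update[of \<sigma> \<nu> "param_var X" p] ssplit.prems(1) by blast
  show ?case
  proof (cases ?r)
    case True
    have "t1" by (rule ssplit.IH(1)) (use agree next_true True in simp_all)
    then show ?thesis by simp
  next
    case False
    have "t2" by (rule ssplit.IH(2)) (use agree next_true False in simp_all)
    then show ?thesis by simp
  qed
qed

lemma accepts_iff_satisfiable:
  assumes ex: "sexec X b 1 Map.empty t" and len: "length b = n"
  shows "t \<longleftrightarrow> satisfiable (active_clauses X n b \<inter> Lk (2 * length X))"
proof
  assume t
  then obtain \<tau> S where tr: "good_trace X n b Map.empty 1 \<tau> S"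
    using accepting_branch_trace[OF ex len] by blast
  have L: "1 \<le> length X" using sexec_counter_valid[OF ex] by simp
  have "\<exists>l\<in>C. lit_val (trace_assignment X \<tau> S) l" if active: "C \<in> active_clauses X n b" for C
  proof -
    obtain g where Cg: "(C, g) \<in> set (all_clauses X n)" "guard_holds b g"
      using active unfolding active_clauses_def by blast
    from Cg(1) show ?thesis
    proof (cases rule: all_clauses_cases)
      case 1
      then show ?thesis using tr L by (simp add: good_trace_def trace_assignment_def)
    next
      case (2 j)
      show ?thesis
      proof (cases "j \<in> S")
        case True
        then show ?thesis using tr 2(2) Cg(2) unfolding good_trace_def instr_sat_def by fastforce
      next
        case False
        then have "\<not> trace_assignment X \<tau> S j" using 2(1) by (simp add: trace_assignment_def)
        moreover have "Neg j \<in> C" using instr_clauses_shape[OF 2(2)] by simp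
        ultimately show ?thesis by force
      qed
    qed
  qed
  then show "satisfiable (active_clauses X n b \<inter> Lk (2 * length X))"
    unfolding satisfiable_def by blast
next
  assume "satisfiable (active_clauses X n b \<inter> Lk (2 * length X))"
  then obtain \<nu> where model: "\<forall>C\<in>active_clauses X n b \<inter> Lk (2 * length X). \<exists>l\<in>C. lit_val \<nu> l"
    unfolding satisfiable_def by blast
  have L: "1 \<le> length X" using sexec_counter_valid[OF ex] by simp
  have "{Pos 1} \<in> active_clauses X n b" unfolding active_clauses_def all_clauses_def by force
  moreover have "{Pos 1} \<in> Lk (2 * length X)"
    using L Pos_lits[of 1 "2 * length X"] by (intro Lk_intro) auto
  ultimately have "\<exists>l\<in>{Pos 1}. lit_val \<nu> l" using model by blast
  then have "\<nu> 1" by simp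
  then show t using model_accepting_branch[OF ex len model] by simp
qed

section \<open>Hardness: the reduction\<close>

fun guard_block :: "guard \<Rightarrow> prim list" where
  "guard_block Always = [Plain (Reg Out (Set True)), Plain (Reg Out (Set True))]"
| "guard_block (IfT j) = [PosT (Reg (In j) Get), Plain (Reg Out (Set True))]"
| "guard_block (IfF j) = [NegT (Reg (In j) Get), Plain (Reg Out (Set True))]"

definition or_prog :: "guard list \<Rightarrow> iseq" where
  "or_prog gs = concat (map guard_block gs) @ [Term]"

lemma length_guard_block [simp]: "length (guard_block g) = 2"
  by (cases g) auto

lemma length_or_prog: "length (or_prog gs) = 2 * length gs + 1"
  by (induction gs) (auto simp: or_prog_def)

lemma nexec_out_step:
  assumes "1 \<le> i" "i \<le> length X" "X ! (i - 1) = Plain (Reg Out (Set True))"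
    "nexec X n (i + 1) (s(Out := True)) s'"
  shows "nexec X n i s s'"
  using nexec.nbasic[of i X "Reg Out (Set True)" n s True "s(Out := True)" s'] assms by simp

lemma nexec_in_step:
  assumes "1 \<le> i" "i \<le> length X" "basic_of (X ! (i - 1)) = Some (Reg (In j) Get)" "1 \<le> j" "j \<le> n"
    "nexec X n (nxt (X ! (i - 1)) (s (In j)) i) s s'"
  shows "nexec X n i s s'"
  using nexec.nbasic[of i X "Reg (In j) Get" n s "s (In j)" s s'] assms by simp

lemma guard_block_sem:
  assumes X: "X = pre @ guard_block g @ rest" and ok: "guard_ok n g"
    and inputs: "\<forall>j. 1 \<le> j \<and> j \<le> n \<longrightarrow> s (In j) = b ! (j - 1)"
    and cont: "nexec X n (length (pre @ guard_block g) + 1) (if guard_holds b g then s(Out := True) else s) s'"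
  shows "nexec X n (length pre + 1) s s'"
proof -
  let ?i = "length pre + 1"
  have len: "?i + 1 \<le> length X" using X by simp
  have at: "X ! (?i - 1) = guard_block g ! 0" "X ! (?i + 1 - 1) = Plain (Reg Out (Set True))"
    using X by (cases g; simp add: nth_append)+
  have cont': "nexec X n (?i + 2) (if guard_holds b g then s(Out := True) else s) s'"
    using cont by simp
  have out: "nexec X n (?i + 1) s0 s'" if "nexec X n (?i + 2) (s0(Out := True)) s'" for s0
    using nexec_out_step[OF _ len at(2)] that by (simp add: add.assoc)
  show ?thesis
  proof (cases g)
    case Always
    have "(s(Out := True))(Out := True) = s(Out := True)" by simp
    then show ?thesis
      using nexec_out_step[of ?i X n s s'] out[of "s(Out := True)"] at len cont' Always by auto
  next
    case (IfT j)
    have step: "nexec X n (nxt (X ! (?i - 1)) (b ! (j - 1)) ?i) s s' \<Longrightarrow> nexec X n ?i s s'"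
      using nexec_in_step[of ?i X j n s s'] at len ok inputs IfT by auto
    show ?thesis using step out[of s] cont' at IfT by (cases "b ! (j - 1)") (auto simp: add.assoc)
  next
    case (IfF j)
    have step: "nexec X n (nxt (X ! (?i - 1)) (b ! (j - 1)) ?i) s s' \<Longrightarrow> nexec X n ?i s s'"
      using nexec_in_step[of ?i X j n s s'] at len ok inputs IfF by auto
    show ?thesis using step out[of s] cont' at IfF by (cases "b ! (j - 1)") (auto simp: add.assoc)
  qed
qed

lemma or_prog_sem:
  assumes "X = pre @ concat (map guard_block gs) @ [Term]" "\<forall>g\<in>set gs. guard_ok n g"
    "\<forall>j. 1 \<le> j \<and> j \<le> n \<longrightarrow> s (In j) = b ! (j - 1)"
  shows "\<exists>s'. nexec X n (length pre + 1) s s' \<and> (s' Out \<longleftrightarrow> s Out \<or> (\<exists>g\<in>set gs. guard_holds b g))"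
  using assms
proof (induction gs arbitrary: pre s)
  case Nil
  have "nexec X n (length pre + 1) s s"
    using Nil.prems(1) by (intro nexec.nterm) (auto simp: nth_append)
  then show ?case by auto
next
  case (Cons g gs)
  let ?s1 = "if guard_holds b g then s(Out := True) else s"
  have X: "X = (pre @ guard_block g) @ concat (map guard_block gs) @ [Term]"
    using Cons.prems(1) by simp
  have "\<forall>j. 1 \<le> j \<and> j \<le> n \<longrightarrow> ?s1 (In j) = b ! (j - 1)" using Cons.prems(3) by simp
  then have "\<exists>s'. nexec X n (length (pre @ guard_block g) + 1) ?s1 s' \<and>
      (s' Out \<longleftrightarrow> ?s1 Out \<or> (\<exists>g\<in>set gs. guard_holds b g))"
    using Cons.IH[OF X] Cons.prems(2) by simp
  then obtain s' where s': "nexec X n (length (pre @ guard_block g) + 1) ?s1 s'"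
      "s' Out \<longleftrightarrow> ?s1 Out \<or> (\<exists>g\<in>set gs. guard_holds b g)"
    by blast
  have "nexec X n (length pre + 1) s s'"
    using guard_block_sem[OF _ _ Cons.prems(3) s'(1)] Cons.prems(1,2) by simp
  moreover have "?s1 Out \<longleftrightarrow> s Out \<or> guard_holds b g" by simp
  ultimately show ?case using s'(2) by auto
qed

lemma basics_guard_blocks:
  "\<forall>g\<in>set gs. guard_ok n g \<Longrightarrow> basics (concat (map guard_block gs)) \<subseteq>
     {Reg (In i) Get | i. i \<ge> 1} \<union> {Reg Out (Set b) | b. True}"
proof (induction gs)
  case Nil
  then show ?case by (simp add: basics_def)
next
  case (Cons g gs)
  then show ?case by (cases g) (auto simp: basics_append basics_Cons)
qed

lemma or_prog_computes:
  assumes "\<forall>g\<in>set gs. guard_ok n g"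
  shows "computes (or_prog gs) n (\<lambda>b. \<exists>g\<in>set gs. guard_holds b g)"
proof -
  have "or_prog gs \<in> IS_br"
    using basics_guard_blocks[OF assms] unfolding IS_br_def or_prog_def
    by (auto simp: basics_append basics_Cons basics_def)
  moreover have "\<exists>s'. nexec (or_prog gs) n 1 (init_regs b) s' \<and> (s' Out \<longleftrightarrow> (\<exists>g\<in>set gs. guard_holds b g))"
    if "length b = n" for b
  proof -
    have inputs: "\<forall>j. 1 \<le> j \<and> j \<le> n \<longrightarrow> init_regs b (In j) = b ! (j - 1)"
      using that by (simp add: init_regs_def)
    have "init_regs b Out = False" by (simp add: init_regs_def)
    then show ?thesis
      using or_prog_sem[of "or_prog gs" "[]" gs, OF _ assms inputs] by (simp add: or_prog_def)
  qed
  ultimately show ?thesis unfolding computes_def by blast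
qed

text \<open>Whether a clause C is active is the disjunction of the guards attached to C.\<close>
lemma active_clause_computable:
  "\<exists>Y. computes Y n (\<lambda>b. C \<in> active_clauses X n b) \<and> length Y \<le> 4 * length X + 3"
proof -
  let ?gs = "map snd (filter (\<lambda>x. fst x = C) (all_clauses X n))"
  have ok: "\<forall>g\<in>set ?gs. guard_ok n g" using all_clauses_guard_ok by auto
  have "(\<lambda>b. C \<in> active_clauses X n b) = (\<lambda>b. \<exists>g\<in>set ?gs. guard_holds b g)"
    unfolding active_clauses_def by force
  moreover have "length ?gs \<le> 2 * length X + 1"
    unfolding length_map by (rule le_trans[OF length_filter_le length_all_clauses])
  then have "length (or_prog ?gs) \<le> 4 * length X + 3" unfolding length_or_prog by simp
  ultimately show ?thesis using or_prog_computes[OF ok] by auto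
qed

lemma split_computes_reduces:
  assumes adm: "admissible_alpha alpha" and X: "split_computes X n f"
  defines "k \<equiv> 2 * length X"
  shows "red_l (4 * length X + 3) n f (d k) (sat3C alpha (d k))"
proof -
  define h where "h = (\<lambda>c b. alpha k (Suc c) \<in> active_clauses X n b)"
  have bits: "\<exists>Y. computes Y n (h c) \<and> length Y \<le> 4 * length X + 3" for c
    unfolding h_def by (rule active_clause_computable)
  have "f b = sat3C alpha (d k) (map (\<lambda>c. h c b) [0..<d k])" if len: "length b = n" for b
  proof -
    obtain t where t: "sexec X b 1 Map.empty t" "f b \<longleftrightarrow> t"
      using X len unfolding split_computes_def by blast
    show ?thesis
      using accepts_iff_satisfiable[OF t(1) len] t(2) sat3C_characteristic[OF adm]
      unfolding h_def k_def by simp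
  qed
  then show ?thesis
    unfolding red_l_def using bits by (intro exI[of _ h]) blast
qed

text \<open>Every family in P*_lsis reduces to 3SAT^C: the bounds on l and m are cubic in
  the polynomial length bound h of the splitting instruction sequences.\<close>
theorem sat3C_hard:
  assumes adm: "admissible_alpha alpha" and G: "G \<in> P_lsis"
  shows "red_pl G (sat3C alpha)"
proof -
  obtain h where h: "\<forall>n. \<exists>X. split_computes X n (G n) \<and> length X \<le> poly h n"
    using G unfolding P_lsis_def by blast
  define q where "q = (smult 4 h + [:3:]) ^ 3"
  have "\<exists>l m. l \<le> poly q n \<and> m \<le> poly q n \<and> red_l l n (G n) m (sat3C alpha m)" for n
  proof -
    obtain X where X: "split_computes X n (G n)" "length X \<le> poly h n" using h by blast
    have q: "poly q n = (4 * poly h n + 3) ^ 3" by (simp add: q_def)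
    have "4 * length X + 3 \<le> 4 * poly h n + 3" using X(2) by simp
    also have "\<dots> \<le> poly q n" unfolding q by (simp add: self_le_power)
    finally have l: "4 * length X + 3 \<le> poly q n" .
    have "d (2 * length X) \<le> (4 * length X + 1) ^ 3"
      using d_upper_bound[of "2 * length X"] by simp
    also have "\<dots> \<le> poly q n" unfolding q using X(2) by (intro power_mono) auto
    finally have m: "d (2 * length X) \<le> poly q n" .
    show ?thesis using split_computes_reduces[OF adm X(1)] l m by blast
  qed
  then show ?thesis unfolding red_pl_def by blast
qed

theorem theorem11:
  fixes alpha :: "nat \<Rightarrow> nat \<Rightarrow> lit set"
  assumes "admissible_alpha alpha"
  shows "P_lsis_complete (sat3C alpha)"
  unfolding P_lsis_complete_def using sat3C_in_P_lsis[OF assms] sat3C_hard[OF assms] by blast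

end
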